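(* Let $G$ be a bipartite graph without isolated vertices such that $\mathrm{Ind}(G)$ is pure. Then some pure order of $G$ has a cross if and only if every pure order of $G$ has a cross.
   Context: $\mathrm{Ind}(G)$ is the complex of independent sets of $G$. For a bipartite graph $G$ without isolated vertices with $\mathrm{Ind}(G)$ pure, a pure order of $G$ is a partition of the vertex set into independent sets $\{x_1,\ldots,x_n\}$ and $\{y_1,\ldots,y_n\}$ such that (1) $x_iy_i$ is an edge for all $1\le i\le n$, and (2) whenever $x_iy_j$ and $x_jy_k$ are edges with $i,j,k$ distinct, $x_iy_k$ is an edge. (Such orders exist exactly when $\mathrm{Ind}(G)$ is pure, by a theorem of Villarreal.) A pure order has a cross if there are $i\ne j$ with both $x_iy_j$ and $x_jy_i$ edges of $G$; otherwise it is cross-free. *)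

theory Defs
  imports Main
begin

definition simple_graph :: "'a set \<Rightarrow> ('a \<Rightarrow> 'a \<Rightarrow> bool) \<Rightarrow> bool" where
  "simple_graph V E \<longleftrightarrow> finite V \<and> (\<forall>u v. E u v \<longrightarrow> u \<in> V \<and> v \<in> V)
     \<and> (\<forall>u v. E u v \<longrightarrow> E v u) \<and> (\<forall>v. \<not> E v v)"

definition independent :: "'a set \<Rightarrow> ('a \<Rightarrow> 'a \<Rightarrow> bool) \<Rightarrow> 'a set \<Rightarrow> bool" where
  "independent V E S \<longleftrightarrow> S \<subseteq> V \<and> (\<forall>u\<in>S. \<forall>v\<in>S. \<not> E u v)"

definition bipartite :: "'a set \<Rightarrow> ('a \<Rightarrow> 'a \<Rightarrow> bool) \<Rightarrow> bool" where
  "bipartite V E \<longleftrightarrow> (\<exists>A B. A \<union> B = V \<and> A \<inter> B = {} \<and> independent V E A \<and> independent V E B)"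

definition no_isolated :: "'a set \<Rightarrow> ('a \<Rightarrow> 'a \<Rightarrow> bool) \<Rightarrow> bool" where
  "no_isolated V E \<longleftrightarrow> (\<forall>v\<in>V. \<exists>u. E v u)"

text \<open>Facets of Ind(G) are the maximal independent sets; Ind(G) is pure iff all facets have the same size.\<close>
definition maximal_independent :: "'a set \<Rightarrow> ('a \<Rightarrow> 'a \<Rightarrow> bool) \<Rightarrow> 'a set \<Rightarrow> bool" where
  "maximal_independent V E S \<longleftrightarrow> independent V E S \<and>
     (\<forall>T. independent V E T \<and> S \<subseteq> T \<longrightarrow> T = S)"

definition Ind_pure :: "'a set \<Rightarrow> ('a \<Rightarrow> 'a \<Rightarrow> bool) \<Rightarrow> bool" where
  "Ind_pure V E \<longleftrightarrow> (\<forall>S T. maximal_independent V E S \<and> maximal_independent V E T \<longrightarrow> card S = card T)"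

text \<open>Pure order, indexed by 0..<n instead of 1..n.\<close>
definition pure_order :: "'a set \<Rightarrow> ('a \<Rightarrow> 'a \<Rightarrow> bool) \<Rightarrow> nat \<Rightarrow> (nat \<Rightarrow> 'a) \<Rightarrow> (nat \<Rightarrow> 'a) \<Rightarrow> bool" where
  "pure_order V E n x y \<longleftrightarrow>
     inj_on x {..<n} \<and> inj_on y {..<n} \<and>
     x ` {..<n} \<union> y ` {..<n} = V \<and> x ` {..<n} \<inter> y ` {..<n} = {} \<and>
     independent V E (x ` {..<n}) \<and> independent V E (y ` {..<n}) \<and>
     (\<forall>i<n. E (x i) (y i)) \<and>
     (\<forall>i<n. \<forall>j<n. \<forall>k<n. i \<noteq> j \<and> j \<noteq> k \<and> i \<noteq> k \<and> E (x i) (y j) \<and> E (x j) (y k)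
        \<longrightarrow> E (x i) (y k))"

definition has_cross :: "('a \<Rightarrow> 'a \<Rightarrow> bool) \<Rightarrow> nat \<Rightarrow> (nat \<Rightarrow> 'a) \<Rightarrow> (nat \<Rightarrow> 'a) \<Rightarrow> bool" where
  "has_cross E n x y \<longleftrightarrow> (\<exists>i<n. \<exists>j<n. i \<noteq> j \<and> E (x i) (y j) \<and> E (x j) (y i))"

end

theory Submission
  imports Defs
begin

(* The key notion is that of twins: two distinct vertices with the same
   neighbourhood.  If a pure order has a cross x_i y_j, x_j y_i, then condition (2)
   of pure orders forces x_i and x_j to be twins (cross_gives_twins).  Conversely,
   in a graph without isolated vertices twins lie on the same side of any pure
   order, and then their matched partners produce a cross (twins_give_cross).
   Hence one cross yields a cross in every pure order.

   The other direction needs that a pure order exists at all (Villarreal).  We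
   prove Hall's marriage theorem, deduce from purity of Ind(G) that each side of a
   bipartition satisfies Hall's condition, hence a perfect matching exists, and
   show that purity makes every enumeration along a perfect matching satisfy
   condition (2) (matching_transitive). *)

lemma hall_critical_reduction:
  fixes F :: "'i \<Rightarrow> 'b set"
  assumes fin: "finite I" "\<forall>i\<in>I. finite (F i)"
    and hall: "\<forall>S\<subseteq>I. card S \<le> card (\<Union>(F ` S))"
    and S: "S \<subseteq> I" "card (\<Union>(F ` S)) = card S"
  shows "\<forall>T\<subseteq>I - S. card T \<le> card (\<Union>((\<lambda>i. F i - \<Union>(F ` S)) ` T))"
proof (intro allI impI)
  fix T assume T: "T \<subseteq> I - S"
  let ?U = "\<Union>(F ` S)" and ?N = "\<Union>((\<lambda>i. F i - \<Union>(F ` S)) ` T)"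
  have finS: "finite S" and finT: "finite T" using fin(1) S(1) T finite_subset by blast+
  have finU: "finite ?U" using finS fin(2) S(1) by auto
  have finN: "finite ?N" using finT fin(2) T by (intro finite_UN_I) auto
  have split: "\<Union>(F ` (T \<union> S)) = ?N \<union> ?U" and disj: "?N \<inter> ?U = {}" by auto
  have "card (\<Union>(F ` (T \<union> S))) = card ?N + card ?U"
    unfolding split using card_Un_disjoint[OF finN finU disj] .
  moreover have "card (T \<union> S) = card T + card S"
    using T finS finT by (subst card_Un_disjoint) auto
  moreover have "T \<union> S \<subseteq> I" using T S(1) by blast
  then have "card (T \<union> S) \<le> card (\<Union>(F ` (T \<union> S)))" using hall by blast
  ultimately show "card T \<le> card ?N" using S(2) by linarith
qed

lemma hall_surplus_reduction:
  fixes F :: "'i \<Rightarrow> 'b set"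
  assumes surplus: "\<forall>S. S \<subseteq> I \<and> S \<noteq> {} \<and> S \<noteq> I \<longrightarrow> card S < card (\<Union>(F ` S))"
    and i0: "i0 \<in> I"
  shows "\<forall>T\<subseteq>I - {i0}. card T \<le> card (\<Union>((\<lambda>i. F i - {b}) ` T))"
proof (intro allI impI)
  fix T assume T: "T \<subseteq> I - {i0}"
  show "card T \<le> card (\<Union>((\<lambda>i. F i - {b}) ` T))"
  proof (cases "T = {}")
    case False
    then have "card T < card (\<Union>(F ` T))" using surplus T i0 by blast
    moreover have "\<Union>((\<lambda>i. F i - {b}) ` T) = \<Union>(F ` T) - {b}" by auto
    ultimately show ?thesis by (simp add: card_Diff_singleton_if) linarith
  qed simp
qed

lemma inj_on_glue:
  assumes f: "inj_on f S" "f ` S \<subseteq> U" and g: "inj_on g T" "g ` T \<inter> U = {}"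
  shows "inj_on (\<lambda>i. if i \<in> S then f i else g i) (S \<union> T)"
proof (rule inj_onI)
  fix i j assume i: "i \<in> S \<union> T" and j: "j \<in> S \<union> T"
    and eq: "(if i \<in> S then f i else g i) = (if j \<in> S then f j else g j)"
  have apart: False if "a \<in> S" "b \<in> T" "f a = g b" for a b
    using that f(2) g(2) by blast
  show "i = j"
  proof (cases "i \<in> S"; cases "j \<in> S")
    assume "i \<in> S" "j \<in> S"
    then show ?thesis using eq f(1) by (simp add: inj_on_eq_iff)
  next
    assume "i \<notin> S" "j \<notin> S"
    then show ?thesis using eq i j g(1) by (simp add: inj_on_eq_iff)
  next
    assume "i \<in> S" "j \<notin> S"
    then show ?thesis using eq j apart by auto
  next
    assume "i \<notin> S" "j \<in> S"
    then show ?thesis using eq i apart by (metis UnE)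
  qed
qed

theorem hall_marriage:
  fixes F :: "'i \<Rightarrow> 'b set"
  assumes "finite I" "\<forall>i\<in>I. finite (F i)" "\<forall>S\<subseteq>I. card S \<le> card (\<Union>(F ` S))"
  shows "\<exists>f. inj_on f I \<and> (\<forall>i\<in>I. f i \<in> F i)"
  using assms
proof (induction "card I" arbitrary: I F rule: less_induct)
  case less
  have IH: "\<exists>f. inj_on f J \<and> (\<forall>i\<in>J. f i \<in> G i)"
    if J: "J \<subseteq> I" "J \<noteq> I" and "\<forall>i\<in>J. finite (G i)" "\<forall>T\<subseteq>J. card T \<le> card (\<Union>(G ` T))"
    for J and G :: "'i \<Rightarrow> 'b set"
  proof -
    have "card J < card I" using J less.prems(1) psubset_card_mono by blast
    then show ?thesis
      by (rule less.hyps[OF _ finite_subset[OF J(1) less.prems(1)] that(3,4)])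
  qed
  consider (empty) "I = {}"
    | (critical) S where "S \<subseteq> I" "S \<noteq> {}" "S \<noteq> I" "card (\<Union>(F ` S)) \<le> card S"
    | (surplus) i0 where "i0 \<in> I"
        "\<forall>S. S \<subseteq> I \<and> S \<noteq> {} \<and> S \<noteq> I \<longrightarrow> card S < card (\<Union>(F ` S))"
  proof (cases "I = {}")
    case True
    then show ?thesis by (rule that(1))
  next
    case False
    then obtain i0 where "i0 \<in> I" by blast
    then show ?thesis using that(2,3) by (meson not_le)
  qed
  then show ?case
  proof cases
    case empty
    then show ?thesis by simp
  next
    case critical
    let ?U = "\<Union>(F ` S)" and ?G = "\<lambda>i. F i - \<Union>(F ` S)"
    have tight: "card ?U = card S" using less.prems(3) critical(1,4) by (meson le_antisym)
    have "\<forall>i\<in>S. finite (F i)" "\<forall>T\<subseteq>S. card T \<le> card (\<Union>(F ` T))"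
      using less.prems(2,3) critical(1) by (blast, meson order_trans)
    then obtain f where f: "inj_on f S" "\<forall>i\<in>S. f i \<in> F i"
      using IH[OF critical(1,3)] by blast
    have "I - S \<noteq> I" using critical(1,2) by blast
    moreover have "\<forall>i\<in>I - S. finite (?G i)" using less.prems(2) by blast
    ultimately obtain g where g: "inj_on g (I - S)" "\<forall>i\<in>I - S. g i \<in> ?G i"
      using IH[OF Diff_subset _ _ hall_critical_reduction[OF less.prems critical(1) tight]]
      by blast
    have "f ` S \<subseteq> ?U" using f(2) by blast
    moreover have "g ` (I - S) \<inter> ?U = {}" using g(2) by auto
    ultimately have "inj_on (\<lambda>i. if i \<in> S then f i else g i) (S \<union> (I - S))"
      by (rule inj_on_glue[OF f(1) _ g(1)])
    moreover have "S \<union> (I - S) = I" using critical(1) by blast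
    ultimately show ?thesis
      using f(2) g(2) by (intro exI[of _ "\<lambda>i. if i \<in> S then f i else g i"]) auto
  next
    case surplus
    have "card {i0} \<le> card (\<Union>(F ` {i0}))" using less.prems(3) surplus(1) by blast
    then have "F i0 \<noteq> {}" by auto
    then obtain b where b: "b \<in> F i0" by blast
    have "I - {i0} \<noteq> I" using surplus(1) by blast
    moreover have "\<forall>i\<in>I - {i0}. finite (F i - {b})" using less.prems(2) by blast
    ultimately obtain g where g: "inj_on g (I - {i0})" "\<forall>i\<in>I - {i0}. g i \<in> F i - {b}"
      using IH[OF Diff_subset _ _ hall_surplus_reduction[OF surplus(2,1)]] by blast
    have fresh: "b \<notin> g ` (I - {i0})" using g(2) by auto
    have "inj_on (g(i0 := b)) (I - {i0})" by (rule inj_on_fun_updI[OF g(1) fresh])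
    then have "inj_on (g(i0 := b)) (insert i0 (I - {i0}))"
      by (subst inj_on_insert) (use fresh in auto)
    moreover have "insert i0 (I - {i0}) = I" using surplus(1) by blast
    ultimately show ?thesis using g(2) b by (intro exI[of _ "g(i0 := b)"]) auto
  qed
qed

lemma simple_graph_sym:
  assumes "simple_graph V E" "E u v"
  shows "E v u"
  using assms by (simp add: simple_graph_def)

lemma simple_graph_vertices:
  assumes "simple_graph V E" "E u v"
  shows "u \<in> V" "v \<in> V"
  using assms by (simp_all add: simple_graph_def)

lemma facet_exists:
  assumes sg: "simple_graph V E" and S: "independent V E S"
  shows "\<exists>M. maximal_independent V E M \<and> S \<subseteq> M"
proof -
  let ?C = "{T. independent V E T \<and> S \<subseteq> T}"
  have "?C \<subseteq> Pow V" by (auto simp: independent_def)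
  moreover have "finite V" using sg by (simp add: simple_graph_def)
  ultimately have fin: "finite ?C" by (meson finite_Pow_iff finite_subset)
  have "S \<in> ?C" using S by simp
  then obtain M where M: "M \<in> ?C" "\<forall>T\<in>?C. M \<le> T \<longrightarrow> M = T"
    using finite_has_maximal2[OF fin] by blast
  then have "maximal_independent V E M" unfolding maximal_independent_def by auto
  then show ?thesis using M(1) by blast
qed

lemma independent_card_le_facet:
  assumes sg: "simple_graph V E" and pure: "Ind_pure V E"
    and M: "maximal_independent V E M" and S: "independent V E S"
  shows "card S \<le> card M"
proof -
  obtain M' where M': "maximal_independent V E M'" "S \<subseteq> M'" using facet_exists[OF sg S] by blast
  have "M' \<subseteq> V" using M'(1) by (simp add: maximal_independent_def independent_def)
  then have "finite M'" using sg finite_subset by (auto simp: simple_graph_def)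
  then have "card S \<le> card M'" using M'(2) card_mono by blast
  also have "card M' = card M" using pure M'(1) M unfolding Ind_pure_def by blast
  finally show ?thesis .
qed

lemma bipartition_side_facet:
  assumes sg: "simple_graph V E" and ni: "no_isolated V E"
    and AB: "A \<union> B = V" "A \<inter> B = {}" "independent V E A" "independent V E B"
  shows "maximal_independent V E A"
  unfolding maximal_independent_def
proof (intro conjI allI impI)
  show "independent V E A" by fact
  fix T assume T: "independent V E T \<and> A \<subseteq> T"
  show "T = A"
  proof (rule ccontr)
    assume "T \<noteq> A"
    then obtain b where b: "b \<in> T" "b \<notin> A" using T by blast
    then have bB: "b \<in> B" using T AB(1) by (auto simp: independent_def)
    obtain u where u: "E b u" using ni bB AB(1) by (auto simp: no_isolated_def)
    have "u \<notin> B" using u bB AB(4) by (auto simp: independent_def)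
    then have "u \<in> T" using simple_graph_vertices(2)[OF sg u] AB(1) T by blast
    then show False using T b u by (auto simp: independent_def)
  qed
qed

(* Purity gives Hall's condition: for S within A, the set S together with the
   non-neighbours of S in B is independent, hence has at most card B elements. *)
lemma neighbourhood_hall_condition:
  assumes sg: "simple_graph V E" and pure: "Ind_pure V E"
    and AB: "A \<union> B = V" "A \<inter> B = {}" "independent V E A" "independent V E B"
    and facet: "maximal_independent V E B" and S: "S \<subseteq> A"
  shows "card S \<le> card (\<Union>a\<in>S. {b \<in> B. E a b})"
proof -
  let ?N = "\<Union>a\<in>S. {b \<in> B. E a b}"
  have finB: "finite B" and finS: "finite S"
    using sg AB(1) S finite_subset by (auto simp: simple_graph_def)
  have "independent V E (S \<union> (B - ?N))"
    unfolding independent_def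
  proof (intro conjI ballI)
    show "S \<union> (B - ?N) \<subseteq> V" using S AB(1) by auto
    have "\<forall>u\<in>S. \<forall>v\<in>S. \<not> E u v" using S AB(3) by (auto simp: independent_def)
    moreover fix u v assume "u \<in> S \<union> (B - ?N)" "v \<in> S \<union> (B - ?N)"
    ultimately show "\<not> E u v"
      using AB(4) simple_graph_sym[OF sg] by (auto simp: independent_def)
  qed
  then have "card (S \<union> (B - ?N)) \<le> card B"
    using independent_card_le_facet[OF sg pure facet] by blast
  moreover have "card (S \<union> (B - ?N)) = card S + card (B - ?N)"
    using finS finB S AB(2) by (intro card_Un_disjoint) auto
  moreover have "card (B - ?N) = card B - card ?N"
    using finB by (intro card_Diff_subset) (auto intro: finite_subset)
  moreover have "card ?N \<le> card B" using finB by (intro card_mono) auto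
  ultimately show ?thesis by linarith
qed

lemma perfect_matching:
  assumes sg: "simple_graph V E" and ni: "no_isolated V E" and pure: "Ind_pure V E"
    and AB: "A \<union> B = V" "A \<inter> B = {}" "independent V E A" "independent V E B"
  shows "\<exists>f. bij_betw f A B \<and> (\<forall>a\<in>A. E a (f a))"
proof -
  have BA: "B \<union> A = V" "B \<inter> A = {}" using AB(1,2) by blast+
  have facetA: "maximal_independent V E A" by (rule bipartition_side_facet[OF sg ni AB])
  have facetB: "maximal_independent V E B" by (rule bipartition_side_facet[OF sg ni BA AB(4,3)])
  have same_size: "card A = card B" using pure facetA facetB unfolding Ind_pure_def by blast
  have "finite (A \<union> B)" using sg AB(1) by (simp add: simple_graph_def)
  then have finA: "finite A" and finB: "finite B" by auto
  have "\<forall>a\<in>A. finite {b \<in> B. E a b}" using finB by simp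
  moreover have "\<forall>S\<subseteq>A. card S \<le> card (\<Union>a\<in>S. {b \<in> B. E a b})"
    using neighbourhood_hall_condition[OF sg pure AB facetB] by simp
  ultimately obtain f where f: "inj_on f A" "\<forall>a\<in>A. f a \<in> {b \<in> B. E a b}"
    using hall_marriage[OF finA, of "\<lambda>a. {b \<in> B. E a b}"] by meson
  have "f ` A = B"
  proof (rule card_subset_eq[OF finB])
    show "f ` A \<subseteq> B" using f(2) by blast
    show "card (f ` A) = card B" using card_image[OF f(1)] same_size by simp
  qed
  then show ?thesis using f unfolding bij_betw_def by blast
qed

(* Condition (2) of pure orders comes for free: if x_i y_k were a non-edge, a facet
   through x_i and y_k would contain at most one vertex of each matched pair and
   none of x_j, y_j, so it would have fewer than n elements. *)
lemma matching_transitive: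
  fixes n :: nat
  assumes sg: "simple_graph V E" and pure: "Ind_pure V E"
    and inj: "inj_on x {..<n}" and cover: "x ` {..<n} \<union> y ` {..<n} = V"
    and facet: "maximal_independent V E (x ` {..<n})"
    and matched: "\<forall>l<n. E (x l) (y l)"
    and ijk: "i < n" "j < n" "k < n" "i \<noteq> j" "j \<noteq> k" "i \<noteq> k"
    and ij: "E (x i) (y j)" and jk: "E (x j) (y k)"
  shows "E (x i) (y k)"
proof (rule ccontr)
  assume non_edge: "\<not> E (x i) (y k)"
  have irrefl: "\<And>v. \<not> E v v" using sg by (simp add: simple_graph_def)
  have "independent V E {x i, y k}"
    unfolding independent_def using ijk cover non_edge simple_graph_sym[OF sg] irrefl by auto
  then obtain M where M: "maximal_independent V E M" "{x i, y k} \<subseteq> M"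
    using facet_exists[OF sg] by blast
  have MV: "M \<subseteq> V" and Mind: "\<forall>u\<in>M. \<forall>v\<in>M. \<not> E u v"
    using M(1) by (auto simp: maximal_independent_def independent_def)
  have "card M = card (x ` {..<n})" using pure M(1) facet unfolding Ind_pure_def by blast
  also have "\<dots> = n" using card_image[OF inj] by simp
  finally have cardM: "card M = n" .
  define K1 where "K1 = {l. l < n \<and> x l \<in> M}"
  define K2 where "K2 = {l. l < n \<and> y l \<in> M}"
  have "M = x ` K1 \<union> y ` K2" using MV cover by (auto simp: K1_def K2_def)
  then have "card M \<le> card (x ` K1) + card (y ` K2)" by (simp add: card_Un_le)
  also have "\<dots> \<le> card K1 + card K2" by (simp add: card_image_le K1_def K2_def add_mono)
  also have "card K1 + card K2 = card (K1 \<union> K2)"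
  proof -
    have "K1 \<inter> K2 = {}" using Mind matched by (auto simp: K1_def K2_def)
    then show ?thesis by (simp add: card_Un_disjoint K1_def K2_def)
  qed
  also have "card (K1 \<union> K2) \<le> card ({..<n} - {j})"
  proof (rule card_mono)
    show "finite ({..<n} - {j})" by simp
    have "x j \<notin> M" "y j \<notin> M" using Mind M(2) ij jk by auto
    then show "K1 \<union> K2 \<subseteq> {..<n} - {j}" by (auto simp: K1_def K2_def)
  qed
  also have "\<dots> = n - 1" using ijk by simp
  finally show False using cardM ijk by linarith
qed

lemma exists_pure_order:
  assumes sg: "simple_graph V E" and bp: "bipartite V E" and ni: "no_isolated V E"
    and pure: "Ind_pure V E"
  shows "\<exists>n x y. pure_order V E n x y"
proof -
  obtain A B where AB: "A \<union> B = V" "A \<inter> B = {}" "independent V E A" "independent V E B"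
    using bp by (auto simp: bipartite_def)
  obtain f where f: "bij_betw f A B" "\<forall>a\<in>A. E a (f a)"
    using perfect_matching[OF sg ni pure AB] by blast
  define n where "n = card A"
  have "finite A" using sg AB(1) finite_subset by (auto simp: simple_graph_def)
  then obtain x where x: "bij_betw x {..<n} A"
    using ex_bij_betw_nat_finite by (metis n_def atLeast0LessThan)
  define y where "y = f \<circ> x"
  have y: "bij_betw y {..<n} B" unfolding y_def using bij_betw_trans[OF x f(1)] .
  have X: "x ` {..<n} = A" and Y: "y ` {..<n} = B"
    using x y by (simp_all add: bij_betw_def)
  have cover: "x ` {..<n} \<union> y ` {..<n} = V" using X Y AB(1) by simp
  have matched: "\<forall>l<n. E (x l) (y l)" using f(2) X by (auto simp: y_def)
  have facet: "maximal_independent V E (x ` {..<n})"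
    using bipartition_side_facet[OF sg ni AB] X by simp
  show ?thesis
    unfolding pure_order_def
  proof (intro exI conjI allI impI)
    show "inj_on x {..<n}" "inj_on y {..<n}" using x y by (simp_all add: bij_betw_def)
    show "x ` {..<n} \<union> y ` {..<n} = V" by (rule cover)
    show "x ` {..<n} \<inter> y ` {..<n} = {}" using X Y AB(2) by simp
    show "independent V E (x ` {..<n})" "independent V E (y ` {..<n})" using X Y AB(3,4) by simp_all
    show "E (x l) (y l)" if "l < n" for l using matched that by blast
    fix i j k assume "i < n" "j < n" "k < n"
      and "i \<noteq> j \<and> j \<noteq> k \<and> i \<noteq> k \<and> E (x i) (y j) \<and> E (x j) (y k)"
    then show "E (x i) (y k)"
      using matching_transitive[OF sg pure _ cover facet matched] x by (auto simp: bij_betw_def)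
  qed
qed

definition twins :: "'a set \<Rightarrow> ('a \<Rightarrow> 'a \<Rightarrow> bool) \<Rightarrow> 'a \<Rightarrow> 'a \<Rightarrow> bool" where
  "twins V E u v \<longleftrightarrow> u \<in> V \<and> v \<in> V \<and> u \<noteq> v \<and> (\<forall>w. E u w \<longleftrightarrow> E v w)"

(* In a pure order with a cross at i, j, every neighbour of x_i is a neighbour of
   x_j: it is some y_k, and for k distinct from i and j condition (2) applies. *)
lemma cross_neighbour_transfer:
  assumes po: "pure_order V E n x y" and sg: "simple_graph V E"
    and ij: "i < n" "j < n" "i \<noteq> j" and cross: "E (x i) (y j)" "E (x j) (y i)"
    and w: "E (x i) w"
  shows "E (x j) w"
proof -
  have cover: "x ` {..<n} \<union> y ` {..<n} = V" and X: "independent V E (x ` {..<n})"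
    and matched: "\<forall>l<n. E (x l) (y l)"
    and trans: "\<forall>i<n. \<forall>j<n. \<forall>k<n. i \<noteq> j \<and> j \<noteq> k \<and> i \<noteq> k \<and> E (x i) (y j) \<and> E (x j) (y k)
        \<longrightarrow> E (x i) (y k)"
    using po unfolding pure_order_def by blast+
  have "w \<notin> x ` {..<n}" using X w ij(1) unfolding independent_def by blast
  moreover have "w \<in> V" by (rule simple_graph_vertices(2)[OF sg w])
  ultimately obtain k where k: "k < n" "w = y k" using cover by blast
  consider "k = j" | "k = i" | "k \<noteq> i" "k \<noteq> j" by blast
  then show ?thesis
  proof cases
    case 1
    then show ?thesis using matched k ij by simp
  next
    case 2
    then show ?thesis using cross(2) k by simp
  next
    case 3
    then show ?thesis using trans ij k cross(2) w by blast
  qed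
qed

lemma cross_gives_twins:
  assumes po: "pure_order V E n x y" and sg: "simple_graph V E"
    and ij: "i < n" "j < n" "i \<noteq> j" and cross: "E (x i) (y j)" "E (x j) (y i)"
  shows "twins V E (x i) (x j)"
  unfolding twins_def
proof (intro conjI allI iffI)
  have inj: "inj_on x {..<n}" and cover: "x ` {..<n} \<union> y ` {..<n} = V"
    using po by (simp_all add: pure_order_def)
  show "x i \<in> V" "x j \<in> V" using cover ij by blast+
  show "x i \<noteq> x j" using inj ij by (simp add: inj_on_eq_iff)
  show "E (x j) w" if "E (x i) w" for w
    by (rule cross_neighbour_transfer[OF po sg ij cross that])
  show "E (x i) w" if "E (x j) w" for w
    using cross_neighbour_transfer[OF po sg ij(2,1) _ cross(2,1) that] ij(3) by blast
qed

(* Twins cannot lie on different sides of a pure order: a common neighbour would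
   be adjacent to a vertex on its own side. *)
lemma twins_not_across:
  assumes po: "pure_order V E n x y" and sg: "simple_graph V E" and ni: "no_isolated V E"
    and tw: "twins V E u v" and u: "u \<in> x ` {..<n}" and v: "v \<in> y ` {..<n}"
  shows False
proof -
  have cover: "x ` {..<n} \<union> y ` {..<n} = V"
    and X: "independent V E (x ` {..<n})" and Y: "independent V E (y ` {..<n})"
    using po by (simp_all add: pure_order_def)
  obtain w where uw: "E u w" using ni tw unfolding no_isolated_def twins_def by blast
  then have vw: "E v w" using tw unfolding twins_def by blast
  have "w \<in> x ` {..<n} \<or> w \<in> y ` {..<n}" using simple_graph_vertices(2)[OF sg uw] cover by blast
  then show False
  proof
    assume "w \<in> x ` {..<n}"
    then show False using X u uw unfolding independent_def by blast
  next
    assume "w \<in> y ` {..<n}"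
    then show False using Y v vw unfolding independent_def by blast
  qed
qed

(* Twins force a cross in every pure order: x_i, x_j twins (or y_i, y_j twins)
   are each adjacent to the other's matched partner. *)
lemma twins_give_cross:
  assumes po: "pure_order V E n x y" and sg: "simple_graph V E" and ni: "no_isolated V E"
    and tw: "twins V E u v"
  shows "has_cross E n x y"
proof -
  have cover: "x ` {..<n} \<union> y ` {..<n} = V" and matched: "\<forall>l<n. E (x l) (y l)"
    using po by (simp_all add: pure_order_def)
  have same_nbhd: "E u w \<longleftrightarrow> E v w" for w using tw by (simp add: twins_def)
  have tw': "twins V E v u" using tw by (auto simp: twins_def)
  have "u \<in> x ` {..<n} \<or> u \<in> y ` {..<n}" "v \<in> x ` {..<n} \<or> v \<in> y ` {..<n}"
    using tw cover by (auto simp: twins_def)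
  then consider "u \<in> x ` {..<n}" "v \<in> x ` {..<n}" | "u \<in> y ` {..<n}" "v \<in> y ` {..<n}"
    using twins_not_across[OF po sg ni tw] twins_not_across[OF po sg ni tw'] by blast
  then show ?thesis
  proof cases
    case 1
    then obtain i j where ij: "i < n" "j < n" and uv: "u = x i" "v = x j" by blast
    have "i \<noteq> j" using uv tw by (auto simp: twins_def)
    moreover have "E (x i) (y j)" "E (x j) (y i)" using same_nbhd matched ij uv by blast+
    ultimately show ?thesis using ij unfolding has_cross_def by blast
  next
    case 2
    then obtain i j where ij: "i < n" "j < n" and uv: "u = y i" "v = y j" by blast
    have "i \<noteq> j" using uv tw by (auto simp: twins_def)
    moreover have "E (y j) (x i)" "E (y i) (x j)"
      using same_nbhd matched ij uv simple_graph_sym[OF sg] by blast+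
    then have "E (x i) (y j)" "E (x j) (y i)" using simple_graph_sym[OF sg] by blast+
    ultimately show ?thesis using ij unfolding has_cross_def by blast
  qed
qed

theorem lemma4p5:
  fixes V :: "'a set" and E :: "'a \<Rightarrow> 'a \<Rightarrow> bool"
  assumes "simple_graph V E" and "bipartite V E" and "no_isolated V E" and "Ind_pure V E"
  shows "(\<exists>n x y. pure_order V E n x y \<and> has_cross E n x y) \<longleftrightarrow>
         (\<forall>n x y. pure_order V E n x y \<longrightarrow> has_cross E n x y)"
proof
  assume "\<exists>n x y. pure_order V E n x y \<and> has_cross E n x y"
  then obtain n x y i j where po: "pure_order V E n x y" and ij: "i < n" "j < n" "i \<noteq> j"
    and cross: "E (x i) (y j)" "E (x j) (y i)" by (auto simp: has_cross_def)
  have tw: "twins V E (x i) (x j)" by (rule cross_gives_twins[OF po assms(1) ij cross])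
  show "\<forall>n x y. pure_order V E n x y \<longrightarrow> has_cross E n x y"
    using twins_give_cross[OF _ assms(1) assms(3) tw] by blast
next
  assume "\<forall>n x y. pure_order V E n x y \<longrightarrow> has_cross E n x y"
  then show "\<exists>n x y. pure_order V E n x y \<and> has_cross E n x y"
    using exists_pure_order[OF assms] by blast
qed

end
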